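(* For all $n\ge1$, \[B_n(x)=\sum_{j=0}^{\lfloor n/2\rfloor}2^j\,\hat b_{n,j}\,x^j(1+x)^{n-2j},\] where $B_n(x)=\sum_{\pi\in\mathfrak B_n}x^{\mathrm{des}_B(\pi)}$ and $\hat b_{n,j}$ is the number of type B André permutations $\pi\in\mathfrak B_n$ with exactly $j$ valleys.
   Context: $\mathfrak B_n$ is the set of signed permutations $\pi=\pi_1\cdots\pi_n$ (words over $\{\pm1,\dots,\pm n\}$ with $|\pi_1|,\dots,|\pi_n|$ a permutation of $[n]$), compared as integers; set $\pi_0=0$. $\mathrm{des}_B(\pi)=\#\{i\in\{0,\dots,n-1\}:\pi_i>\pi_{i+1}\}$. A valley of $\pi$ is $i\in\{1,\dots,n-1\}$ with $\pi_{i-1}>\pi_i<\pi_{i+1}$. For $i\in[n]$, the $\pi_i$-factorization of the word $0\pi_1\cdots\pi_n$ is $w_1w_2\pi_iw_4w_5$ where $w_2$ (resp. $w_4$) is the longest factor ending just before (resp. starting just after) $\pi_i$ all of whose letters exceed $\pi_i$. $\pi\in\mathfrak B_n$ is a type B André permutation if (i) no $i\in\{1,\dots,n-1\}$ has $\pi_{i-1}>\pi_i>\pi_{i+1}$, (ii) $\pi_{n-1}<\pi_n$, and (iii) for every valley $i$, the maximum letter of $w_2$ is smaller than the maximum letter of $w_4$ in the $\pi_i$-factorization. *)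

theory Defs
  imports Complex_Main
begin

text \<open>A signed permutation of [n] is represented by the word pi_1 ... pi_n as an int list.\<close>
definition signed_perms :: "nat \<Rightarrow> int list set" where
  "signed_perms n = {w. length w = n \<and> distinct (map abs w) \<and> set (map abs w) = {1..int n}}"

text \<open>The word 0 pi_1 ... pi_n, indexed from 0 (so position i holds pi_i, with pi_0 = 0).\<close>
definition zword :: "int list \<Rightarrow> int list" where
  "zword w = 0 # w"

definition desB :: "int list \<Rightarrow> nat" where
  "desB w = card {i. i < length w \<and> zword w ! i > zword w ! (i + 1)}"

definition valleys :: "int list \<Rightarrow> nat set" where
  "valleys w = {i. 1 \<le> i \<and> i < length w \<and>
      zword w ! (i - 1) > zword w ! i \<and> zword w ! i < zword w ! (i + 1)}"

text \<open>Max letter of w2 (longest factor ending just before position i with all letters > pi_i)\<close>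
definition max_w2 :: "int list \<Rightarrow> nat \<Rightarrow> int" where
  "max_w2 w i = Max {zword w ! k | k. k < i \<and>
      (\<forall>m. k \<le> m \<and> m < i \<longrightarrow> zword w ! m > zword w ! i)}"

text \<open>Max letter of w4 (longest factor starting just after position i with all letters > pi_i)\<close>
definition max_w4 :: "int list \<Rightarrow> nat \<Rightarrow> int" where
  "max_w4 w i = Max {zword w ! k | k. i < k \<and> k \<le> length w \<and>
      (\<forall>m. i < m \<and> m \<le> k \<longrightarrow> zword w ! m > zword w ! i)}"

definition andreB :: "int list \<Rightarrow> bool" where
  "andreB w \<longleftrightarrow>
     (\<not> (\<exists>i. 1 \<le> i \<and> i < length w \<and>
            zword w ! (i - 1) > zword w ! i \<and> zword w ! i > zword w ! (i + 1))) \<and>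
     zword w ! (length w - 1) < zword w ! (length w) \<and>
     (\<forall>i \<in> valleys w. max_w2 w i < max_w4 w i)"

definition BnPoly :: "nat \<Rightarrow> real \<Rightarrow> real" where
  "BnPoly n x = (\<Sum>w\<in>signed_perms n. x ^ desB w)"

definition bhat :: "nat \<Rightarrow> nat \<Rightarrow> nat" where
  "bhat n j = card {w \<in> signed_perms n. andreB w \<and> card (valleys w) = j}"

end

theory Submission
  imports Defs "HOL-Combinatorics.Multiset_Permutations"
begin

(* Write a signed permutation as a word \<pi> on its set X of letters (the absolute values of the
   letters are 1, ..., n) and group the words 0\<pi> by X.
   Type A: splitting a word on a finite set at its least letter m, the descent polynomial
   satisfies a recursion in which the part before m contributes a factor x iff it is nonempty.
   Symmetrising over the two parts turns this into the recursion satisfied by the weights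
   (2x)^(#valleys) (1+x)^(...) of the Andre words, so the two polynomials agree.
   Type B: by induction on |X|, the contributions of X and -X together equal those of the Andre
   words 0\<pi>.  If all letters of X have the same sign this is type A.  Otherwise let m < 0 < M be
   the least and the greatest letter and split 0\<pi> at m if m precedes M, at M otherwise: either
   way exactly one descent is created, and the type A polynomial of the remaining letters does not
   change when M is replaced by m, so both sides satisfy the same recursion. *)

section \<open>Descents, valleys and Andre words\<close>

definition des :: "'a::linorder list \<Rightarrow> nat" where
  "des l = card {i. Suc i < length l \<and> l ! i > l ! Suc i}"

lemma des_Nil [simp]: "des [] = 0"
  by (simp add: des_def)

lemma des_Cons: "des (a # l) = (if l \<noteq> [] \<and> a > hd l then 1 else 0) + des l"
proof -
  let ?D = "{i. Suc i < length l \<and> l ! i > l ! Suc i}"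
  have "{i. Suc i < length (a # l) \<and> (a # l) ! i > (a # l) ! Suc i} =
      (if l \<noteq> [] \<and> a > hd l then {0} else {}) \<union> Suc ` ?D"
  proof (rule set_eqI)
    fix i
    show "i \<in> {i. Suc i < length (a # l) \<and> (a # l) ! i > (a # l) ! Suc i} \<longleftrightarrow>
        i \<in> (if l \<noteq> [] \<and> a > hd l then {0} else {}) \<union> Suc ` ?D"
      by (cases i) (auto simp: hd_conv_nth)
  qed
  moreover have "finite ?D"
    by (rule finite_subset[of _ "{..<length l}"]) auto
  ultimately show ?thesis
    by (auto simp: des_def card_image)
qed

lemma des_append:
  "des (u @ w) = des u + des w + (if u \<noteq> [] \<and> w \<noteq> [] \<and> last u > hd w then 1 else 0)"
  by (induction u) (auto simp: des_Cons neq_Nil_conv)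

lemma des_append_Cons_min:
  assumes "\<forall>y\<in>set u. m < y" "\<forall>y\<in>set v. m < y"
  shows "des (u @ m # v) = des u + des v + (if u = [] then 0 else 1)"
  using assms by (cases v) (auto simp: des_append des_Cons)

lemma des_append_Cons_max:
  assumes "\<forall>y\<in>set u. y < M" "\<forall>y\<in>set v. y < M"
  shows "des (u @ M # v) = des u + des v + (if v = [] then 0 else 1)"
proof -
  have "u = [] \<or> \<not> M < last u"
    using assms(1) last_in_set[of u] by (cases "u = []") (auto dest: less_asym)
  with assms show ?thesis
    by (cases v) (auto simp: des_append des_Cons)
qed

lemma des_rev_map_uminus: "des (rev (map uminus l)) = des (l :: 'a::linordered_ab_group_add list)"
  by (induction l) (auto simp: des_append des_Cons last_rev hd_map neq_Nil_conv)

definition triple_positions :: "('a \<Rightarrow> 'a \<Rightarrow> 'a \<Rightarrow> bool) \<Rightarrow> 'a list \<Rightarrow> nat set" where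
  "triple_positions R l = {i. 0 < i \<and> Suc i < length l \<and> R (l ! (i - 1)) (l ! i) (l ! Suc i)}"

lemma finite_triple_positions [simp]: "finite (triple_positions R l)"
  by (rule finite_subset[of _ "{..<length l}"]) (auto simp: triple_positions_def)

lemma triple_positions_append_Cons:
  "triple_positions R (u @ m # v) = triple_positions R u
     \<union> {i. Suc i = length u \<and> 0 < i \<and> R (u ! (i - 1)) (u ! i) m}
     \<union> {i. i = length u \<and> u \<noteq> [] \<and> v \<noteq> [] \<and> R (last u) m (hd v)}
     \<union> {i. i = Suc (length u) \<and> Suc 0 < length v \<and> R m (v ! 0) (v ! 1)}
     \<union> (\<lambda>j. Suc (length u) + j) ` triple_positions R v" (is "?L = ?R")
proof (rule set_eqI)
  fix i
  have "Suc i < length u \<or> Suc i = length u \<or> i = length u \<or> i = Suc (length u)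
      \<or> (\<exists>j. i = Suc (length u) + j \<and> 0 < j)"
    by presburger
  then consider "Suc i < length u" | "Suc i = length u" | "i = length u" | "i = Suc (length u)"
    | j where "i = Suc (length u) + j" "0 < j"
    by blast
  then show "i \<in> ?L \<longleftrightarrow> i \<in> ?R"
  proof cases
    case 3
    then show ?thesis
      by (auto simp: triple_positions_def nth_append last_conv_nth hd_conv_nth)
  next
    case (5 j)
    then have "(u @ m # v) ! (i - 1) = v ! (j - 1)" "(u @ m # v) ! i = v ! j"
      "(u @ m # v) ! Suc i = v ! Suc j"
      by (auto simp: nth_append)
    with 5 show ?thesis
      by (auto simp: triple_positions_def)
  qed (auto simp: triple_positions_def nth_append)
qed

definition valley_set :: "'a::linorder list \<Rightarrow> nat set" where
  "valley_set l = triple_positions (\<lambda>a b c. b < a \<and> b < c) l"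

lemma finite_valley_set [simp]: "finite (valley_set l)"
  by (simp add: valley_set_def)

lemma valley_set_Nil [simp]: "valley_set [] = {}"
  by (simp add: valley_set_def triple_positions_def)

lemma valley_set_append_Cons_min:
  assumes "\<forall>y\<in>set u. m < y" "\<forall>y\<in>set v. m < y"
  shows "valley_set (u @ m # v) = valley_set u \<union> (if u \<noteq> [] \<and> v \<noteq> [] then {length u} else {})
           \<union> (\<lambda>j. Suc (length u) + j) ` valley_set v"
proof -
  have "\<not> u ! i < m" if "i < length u" for i
    by (meson assms(1) nth_mem less_asym that)
  then have end_of_u: "{i. Suc i = length u \<and> 0 < i \<and> u ! i < u ! (i - 1) \<and> u ! i < m} = {}"
    by fastforce
  have at_m: "{i. i = length u \<and> u \<noteq> [] \<and> v \<noteq> [] \<and> m < last u \<and> m < hd v} =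
      (if u \<noteq> [] \<and> v \<noteq> [] then {length u} else {})"
    using assms by auto
  have start_of_v: "{i. i = Suc (length u) \<and> Suc 0 < length v \<and> v ! 0 < m \<and> v ! 0 < v ! 1} = {}"
    using assms(2) by (cases v) (auto dest: less_asym)
  show ?thesis
    unfolding valley_set_def triple_positions_append_Cons end_of_u at_m start_of_v by simp
qed

lemma card_valley_set_append_Cons_min:
  assumes "\<forall>y\<in>set u. m < y" "\<forall>y\<in>set v. m < y"
  shows "card (valley_set (u @ m # v)) =
           card (valley_set u) + card (valley_set v) + (if u \<noteq> [] \<and> v \<noteq> [] then 1 else 0)"
proof -
  have "valley_set u \<subseteq> {..<length u}" "(\<lambda>j. Suc (length u) + j) ` valley_set v \<subseteq> {Suc (length u)..}"
    by (auto simp: valley_set_def triple_positions_def)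
  then have "valley_set u \<inter> (\<lambda>j. Suc (length u) + j) ` valley_set v = {}"
    "length u \<notin> valley_set u \<union> (\<lambda>j. Suc (length u) + j) ` valley_set v"
    by fastforce+
  moreover have "card ((\<lambda>j. Suc (length u) + j) ` valley_set v) = card (valley_set v)"
    by (simp add: card_image inj_on_def)
  ultimately show ?thesis
    unfolding valley_set_append_Cons_min[OF assms]
    by (auto simp: card_Un_disjoint card_insert_if)
qed

definition no_double_descent :: "'a::linorder list \<Rightarrow> bool" where
  "no_double_descent l \<longleftrightarrow> triple_positions (\<lambda>a b c. b < a \<and> c < b) l = {}"

definition ends_with_ascent :: "'a::linorder list \<Rightarrow> bool" where
  "ends_with_ascent l \<longleftrightarrow> (2 \<le> length l \<longrightarrow> l ! (length l - 2) < l ! (length l - 1))"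

lemma no_double_descent_append_Cons_min:
  assumes "\<forall>y\<in>set u. m < y" "\<forall>y\<in>set v. m < y" "distinct u"
  shows "no_double_descent (u @ m # v) \<longleftrightarrow>
           no_double_descent u \<and> ends_with_ascent u \<and> no_double_descent v"
proof -
  have end_of_u: "{i. Suc i = length u \<and> 0 < i \<and> u ! i < u ! (i - 1) \<and> m < u ! i} = {} \<longleftrightarrow>
      ends_with_ascent u"
  proof
    assume "{i. Suc i = length u \<and> 0 < i \<and> u ! i < u ! (i - 1) \<and> m < u ! i} = {}"
    then have "\<not> u ! (length u - 1) < u ! (length u - 2)" if "2 \<le> length u"
      using assms(1) that by (auto simp: numeral_2_eq_2 Suc_diff_Suc dest!: spec[of _ "length u - 1"])
    moreover have "u ! (length u - 2) \<noteq> u ! (length u - 1)" if "2 \<le> length u"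
      using assms(3) that by (simp add: nth_eq_iff_index_eq)
    ultimately show "ends_with_ascent u"
      unfolding ends_with_ascent_def by fastforce
  next
    assume "ends_with_ascent u"
    moreover have "i = length u - 1" "i - 1 = length u - 2" "2 \<le> length u"
      if "Suc i = length u" "0 < i" for i
      using that by auto
    ultimately show "{i. Suc i = length u \<and> 0 < i \<and> u ! i < u ! (i - 1) \<and> m < u ! i} = {}"
      unfolding ends_with_ascent_def by (fastforce dest: less_asym)
  qed
  have at_m: "{i. i = length u \<and> u \<noteq> [] \<and> v \<noteq> [] \<and> m < last u \<and> hd v < m} = {}"
    using assms(2) by (cases v) (auto dest: less_asym)
  have start_of_v: "{i. i = Suc (length u) \<and> Suc 0 < length v \<and> v ! 0 < m \<and> v ! 1 < v ! 0} = {}"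
    using assms(2) by (cases v) (auto dest: less_asym)
  show ?thesis
    unfolding no_double_descent_def triple_positions_append_Cons at_m start_of_v Un_empty end_of_u
    by simp
qed

lemma ends_with_ascent_append_Cons_min:
  assumes "\<forall>y\<in>set u. m < y" "\<forall>y\<in>set v. m < y"
  shows "ends_with_ascent (u @ m # v) \<longleftrightarrow> (u = [] \<and> v = []) \<or> (v \<noteq> [] \<and> ends_with_ascent v)"
proof (cases v rule: rev_cases)
  case Nil
  then show ?thesis
    using assms(1) last_in_set[of u]
    by (cases u rule: rev_cases) (auto simp: ends_with_ascent_def nth_append)
next
  case (snoc v' b)
  then show ?thesis
    using assms(2) by (cases v' rule: rev_cases) (auto simp: ends_with_ascent_def nth_append)
qed

lemma takeWhile_append_Cons_not: "\<not> P y \<Longrightarrow> takeWhile P (xs @ y # ys) = takeWhile P xs"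
  by (induction xs) auto

(* For a position i of l, left_factor l i is the factor w2 of the (l ! i)-factorization read
   backwards, and right_factor l i is the factor w4. *)
definition left_factor :: "'a::linorder list \<Rightarrow> nat \<Rightarrow> 'a list" where
  "left_factor l i = takeWhile (\<lambda>y. l ! i < y) (rev (take i l))"

definition right_factor :: "'a::linorder list \<Rightarrow> nat \<Rightarrow> 'a list" where
  "right_factor l i = takeWhile (\<lambda>y. l ! i < y) (drop (Suc i) l)"

lemma left_factor_append_left: "i < length u \<Longrightarrow> left_factor (u @ m # v) i = left_factor u i"
  by (simp add: left_factor_def nth_append)

lemma right_factor_append_left:
  assumes "\<forall>y\<in>set u. m < y" "i < length u"
  shows "right_factor (u @ m # v) i = right_factor u i"
proof -
  have "\<not> u ! i < m"
    by (meson assms nth_mem less_asym)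
  with assms(2) show ?thesis
    by (simp add: right_factor_def nth_append takeWhile_append_Cons_not)
qed

lemma left_factor_at_min: "\<forall>y\<in>set u. m < y \<Longrightarrow> left_factor (u @ m # v) (length u) = rev u"
  by (simp add: left_factor_def nth_append)

lemma right_factor_at_min: "\<forall>y\<in>set v. m < y \<Longrightarrow> right_factor (u @ m # v) (length u) = v"
  by (simp add: right_factor_def nth_append)

lemma left_factor_append_right:
  assumes "\<forall>y\<in>set v. m < y" "j < length v"
  shows "left_factor (u @ m # v) (Suc (length u + j)) = left_factor v j"
proof -
  have "\<not> v ! j < m"
    by (meson assms nth_mem less_asym)
  with assms(2) show ?thesis
    by (simp add: left_factor_def nth_append takeWhile_append_Cons_not)
qed

lemma right_factor_append_right:
  "j < length v \<Longrightarrow> right_factor (u @ m # v) (Suc (length u + j)) = right_factor v j"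
  by (simp add: right_factor_def nth_append)

definition andre_valley_condition :: "'a::linorder list \<Rightarrow> bool" where
  "andre_valley_condition l \<longleftrightarrow>
     (\<forall>i\<in>valley_set l. Max (set (left_factor l i)) < Max (set (right_factor l i)))"

lemma andre_valley_condition_append_Cons_min:
  assumes "\<forall>y\<in>set u. m < y" "\<forall>y\<in>set v. m < y"
  shows "andre_valley_condition (u @ m # v) \<longleftrightarrow> andre_valley_condition u \<and> andre_valley_condition v
           \<and> (u \<noteq> [] \<and> v \<noteq> [] \<longrightarrow> Max (set u) < Max (set v))"
proof -
  let ?l = "u @ m # v"
  let ?c = "\<lambda>l i. Max (set (left_factor l i)) < Max (set (right_factor l i))"
  have "andre_valley_condition ?l \<longleftrightarrow> (\<forall>i\<in>valley_set u. ?c ?l i)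
      \<and> (u \<noteq> [] \<and> v \<noteq> [] \<longrightarrow> ?c ?l (length u)) \<and> (\<forall>j\<in>valley_set v. ?c ?l (Suc (length u) + j))"
    unfolding andre_valley_condition_def valley_set_append_Cons_min[OF assms] by auto
  moreover have "(\<forall>i\<in>valley_set u. ?c ?l i) \<longleftrightarrow> andre_valley_condition u"
    unfolding andre_valley_condition_def
    by (intro ball_cong refl)
      (simp add: valley_set_def triple_positions_def left_factor_append_left
        right_factor_append_left[OF assms(1)])
  moreover have "(\<forall>j\<in>valley_set v. ?c ?l (Suc (length u) + j)) \<longleftrightarrow> andre_valley_condition v"
    unfolding andre_valley_condition_def
    by (intro ball_cong refl)
      (simp add: valley_set_def triple_positions_def left_factor_append_right[OF assms(2)]
        right_factor_append_right)
  moreover have "?c ?l (length u) \<longleftrightarrow> Max (set u) < Max (set v)"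
    using assms by (simp add: left_factor_at_min right_factor_at_min)
  ultimately show ?thesis
    by blast
qed

definition andre :: "'a::linorder list \<Rightarrow> bool" where
  "andre l \<longleftrightarrow> no_double_descent l \<and> ends_with_ascent l \<and> andre_valley_condition l"

lemma andre_append_Cons_min:
  assumes "\<forall>y\<in>set u. m < y" "\<forall>y\<in>set v. m < y" "distinct u"
  shows "andre (u @ m # v) \<longleftrightarrow> andre u \<and> andre v \<and> (v = [] \<longrightarrow> u = [])
           \<and> (u \<noteq> [] \<and> v \<noteq> [] \<longrightarrow> Max (set u) < Max (set v))"
  unfolding andre_def no_double_descent_append_Cons_min[OF assms]
    ends_with_ascent_append_Cons_min[OF assms(1,2)]
    andre_valley_condition_append_Cons_min[OF assms(1,2)]
  by (auto simp: ends_with_ascent_def)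

lemma split_at_Min:
  fixes l :: "'a::linorder list"
  assumes "distinct l" "l \<noteq> []"
  obtains u m v where "l = u @ m # v" "\<forall>y\<in>set u. m < y" "\<forall>y\<in>set v. m < y"
proof -
  define m where "m = Min (set l)"
  have "m \<in> set l"
    using assms(2) by (simp add: m_def)
  then obtain u v where uv: "l = u @ m # v"
    by (meson split_list)
  with assms(1) have "m \<notin> set u" "m \<notin> set v"
    by auto
  moreover have "\<forall>y\<in>set l. m \<le> y"
    by (simp add: m_def)
  ultimately have "\<forall>y\<in>set u. m < y" "\<forall>y\<in>set v. m < y"
    using uv by (auto simp: order.strict_iff_order)
  with uv that show thesis
    by blast
qed

lemma andre_card_valley_set_bound:
  "distinct l \<Longrightarrow> andre l \<Longrightarrow> l \<noteq> [] \<Longrightarrow> 2 * card (valley_set l) + 1 \<le> length l"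
proof (induction "length l" arbitrary: l rule: less_induct)
  case less
  obtain u m v where l: "l = u @ m # v" and u: "\<forall>y\<in>set u. m < y" and v: "\<forall>y\<in>set v. m < y"
    using split_at_Min[OF less.prems(1,3)] .
  have "distinct u" "distinct v"
    using less.prems(1) l by auto
  moreover have "andre u" "andre v" "v = [] \<longrightarrow> u = []"
    using less.prems(2) andre_append_Cons_min[OF u v] l \<open>distinct u\<close> by auto
  ultimately have "u \<noteq> [] \<Longrightarrow> 2 * card (valley_set u) + 1 \<le> length u"
    "v \<noteq> [] \<Longrightarrow> 2 * card (valley_set v) + 1 \<le> length v"
    using less.hyps l by auto
  then show ?case
    using l card_valley_set_append_Cons_min[OF u v] \<open>v = [] \<longrightarrow> u = []\<close>
    by (cases "u = []"; cases "v = []") auto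
qed

(* For the word 0\<pi> of a signed permutation \<pi> \<in> B_n with j valleys this is (2x)^j (1+x)^(n-2j). *)
definition gamma_weight :: "real \<Rightarrow> 'a::linorder list \<Rightarrow> real" where
  "gamma_weight x l =
     (2 * x) ^ card (valley_set l) * (1 + x) ^ (length l - 1 - 2 * card (valley_set l))"

definition andre_weight :: "real \<Rightarrow> 'a::linorder list \<Rightarrow> real" where
  "andre_weight x l = (if andre l then gamma_weight x l else 0)"

definition andre_coeff :: "real \<Rightarrow> 'a::linorder set \<Rightarrow> 'a set \<Rightarrow> real" where
  "andre_coeff x U V =
     (if U = {} then (if V = {} then 1 else 1 + x) else if V \<noteq> {} \<and> Max U < Max V then 2 * x else 0)"

lemma andre_weight_Nil [simp]: "andre_weight x [] = 1"
  by (simp add: andre_weight_def gamma_weight_def andre_def no_double_descent_def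
      ends_with_ascent_def andre_valley_condition_def triple_positions_def)

lemma gamma_weight_append_Cons_min:
  assumes u: "\<forall>y\<in>set u. m < y" "distinct u" "andre u"
    and v: "\<forall>y\<in>set v. m < y" "distinct v" "andre v"
    and "v = [] \<longrightarrow> u = []"
  shows "gamma_weight x (u @ m # v) =
           (if u = [] then (if v = [] then 1 else 1 + x) else 2 * x) *
           gamma_weight x u * gamma_weight x v"
proof -
  let ?cu = "card (valley_set u)" and ?cv = "card (valley_set v)"
  have bu: "u \<noteq> [] \<Longrightarrow> 2 * ?cu + 1 \<le> length u" and bv: "v \<noteq> [] \<Longrightarrow> 2 * ?cv + 1 \<le> length v"
    using andre_card_valley_set_bound u v by blast+
  note card_split = card_valley_set_append_Cons_min[OF u(1) v(1)]
  consider "u = []" "v = []" | "u = []" "v \<noteq> []" | "u \<noteq> []" "v \<noteq> []"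
    using assms(7) by blast
  then show ?thesis
  proof cases
    case 1
    then show ?thesis
      using card_split by (simp add: gamma_weight_def)
  next
    case 2
    then have "length (u @ m # v) - 1 - 2 * ?cv = Suc (length v - 1 - 2 * ?cv)"
      using bv by auto
    with 2 show ?thesis
      using card_split by (simp add: gamma_weight_def)
  next
    case 3
    then have "length (u @ m # v) - 1 - 2 * Suc (?cu + ?cv) =
        (length u - 1 - 2 * ?cu) + (length v - 1 - 2 * ?cv)"
      using bu bv by auto
    with 3 show ?thesis
      using card_split by (simp add: gamma_weight_def power_add mult_ac)
  qed
qed

lemma andre_coeff_swap:
  assumes "finite U" "finite V" "U \<inter> V = {}"
  shows "andre_coeff x U V + andre_coeff x V U = (if U = {} then 1 else x) + (if V = {} then 1 else x)"
proof -
  have "Max U \<noteq> Max V" if "U \<noteq> {}" "V \<noteq> {}"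
    using assms that by (metis Max_in disjoint_iff)
  then consider "U = {}" | "V = {}" | "U \<noteq> {}" "V \<noteq> {}" "Max U < Max V"
    | "U \<noteq> {}" "V \<noteq> {}" "Max V < Max U"
    by (auto simp: neq_iff)
  then show ?thesis
    by cases (auto simp: andre_coeff_def dest: less_not_sym)
qed

lemma andre_weight_append_Cons_min:
  assumes u: "\<forall>y\<in>set u. m < y" "distinct u" and v: "\<forall>y\<in>set v. m < y" "distinct v"
  shows "andre_weight x (u @ m # v) =
           andre_coeff x (set u) (set v) * andre_weight x u * andre_weight x v"
proof (cases "andre (u @ m # v)")
  case True
  then have A: "andre u" "andre v" "v = [] \<longrightarrow> u = []"
    and "u \<noteq> [] \<and> v \<noteq> [] \<longrightarrow> Max (set u) < Max (set v)"
    using andre_append_Cons_min[OF u(1) v(1) u(2)] by auto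
  then have "andre_coeff x (set u) (set v) = (if u = [] then (if v = [] then 1 else 1 + x) else 2 * x)"
    by (auto simp: andre_coeff_def)
  with True A show ?thesis
    by (simp add: andre_weight_def gamma_weight_append_Cons_min[OF u A(1) v A(2) A(3)])
next
  case False
  then have "\<not> andre u \<or> \<not> andre v \<or> andre_coeff x (set u) (set v) = 0"
    using andre_append_Cons_min[OF u(1) v(1) u(2)] by (auto simp: andre_coeff_def)
  with False show ?thesis
    by (elim disjE) (simp_all add: andre_weight_def)
qed

lemma andre_weight_singleton [simp]: "andre_weight x [a] = 1"
  using andre_weight_append_Cons_min[of "[]" a "[]" x] by (simp add: andre_coeff_def)

section \<open>Sums over the permutations of a set\<close>

lemma sum_involution_eq:
  fixes f g :: "'a \<Rightarrow> 'b::field_char_0"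
  assumes "finite A" "\<And>X. X \<in> A \<Longrightarrow> \<sigma> X \<in> A" "\<And>X. X \<in> A \<Longrightarrow> \<sigma> (\<sigma> X) = X"
    and "\<And>X. X \<in> A \<Longrightarrow> f X + f (\<sigma> X) = g X + g (\<sigma> X)"
  shows "sum f A = sum g A"
proof -
  have swap: "sum (h \<circ> \<sigma>) A = sum h A" for h :: "'a \<Rightarrow> 'b"
    by (rule sum.reindex_bij_witness[where i = \<sigma> and j = \<sigma>]) (use assms(2,3) in auto)
  have "2 * sum f A = (\<Sum>X\<in>A. f X + f (\<sigma> X))"
    using swap[of f] by (simp add: sum.distrib)
  also have "\<dots> = (\<Sum>X\<in>A. g X + g (\<sigma> X))"
    using assms(4) by (rule sum.cong[OF refl])
  also have "\<dots> = 2 * sum g A"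
    using swap[of g] by (simp add: sum.distrib)
  finally show ?thesis
    by simp
qed

lemma sum_Pow_complement_coeffs:
  fixes a b :: "'a set \<Rightarrow> 'b::field_char_0"
  assumes "finite T" "\<And>U. U \<subseteq> T \<Longrightarrow> a U + a (T - U) = b U + b (T - U)"
  shows "(\<Sum>U\<in>Pow T. a U * F U * F (T - U)) = (\<Sum>U\<in>Pow T. b U * F U * F (T - U))"
proof (rule sum_involution_eq[where \<sigma> = "\<lambda>U. T - U"])
  fix U assume "U \<in> Pow T"
  then have U: "T - (T - U) = U" "U \<subseteq> T"
    by auto
  have "a U * F U * F (T - U) + a (T - U) * F (T - U) * F U = (a U + a (T - U)) * (F U * F (T - U))"
    by (simp add: algebra_simps)
  also have "\<dots> = b U * F U * F (T - U) + b (T - U) * F (T - U) * F U"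
    using assms(2)[OF U(2)] by (simp add: algebra_simps)
  finally show "a U * F U * F (T - U) + a (T - U) * F (T - U) * F (T - (T - U)) =
      b U * F U * F (T - U) + b (T - U) * F (T - U) * F (T - (T - U))"
    unfolding U(1) .
qed (use assms(1) in auto)

lemma sum_Pow_if_notin:
  assumes "finite A"
  shows "(\<Sum>U\<in>Pow A. if b \<notin> U then G U else 0) = (\<Sum>U\<in>Pow (A - {b}). G U)"
proof -
  have "{U \<in> Pow A. b \<notin> U} = Pow (A - {b})"
    by auto
  with assms show ?thesis
    by (simp add: sum.inter_filter[symmetric])
qed

lemma sum_Pow_image_uminus:
  fixes A :: "'a::group_add set"
  shows "(\<Sum>U\<in>Pow (uminus ` A). g U) = (\<Sum>U\<in>Pow A. g (uminus ` U))"
  by (rule sum.reindex_bij_witness[where i = "image uminus" and j = "image uminus"])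
    (auto simp: image_image)

lemma sum_permutations_of_set_split:
  assumes "finite S" "c \<in> S"
  shows "(\<Sum>\<pi>\<in>permutations_of_set S. h \<pi>) = (\<Sum>U\<in>Pow (S - {c}).
           \<Sum>u\<in>permutations_of_set U. \<Sum>v\<in>permutations_of_set (S - {c} - U). h (u @ c # v))"
proof -
  let ?T = "Sigma (Pow (S - {c})) (\<lambda>U. permutations_of_set U \<times> permutations_of_set (S - {c} - U))"
  let ?pre = "takeWhile (\<lambda>y. y \<noteq> c)" and ?post = "\<lambda>\<pi>. tl (dropWhile (\<lambda>y. y \<noteq> c) \<pi>)"
  have split_eq: "?pre (u @ c # v) = u" "?post (u @ c # v) = v" if "c \<notin> set u" for u v
    using that by (induction u) auto
  have "(\<Sum>U\<in>Pow (S - {c}). \<Sum>u\<in>permutations_of_set U. \<Sum>v\<in>permutations_of_set (S - {c} - U).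
      h (u @ c # v)) = (\<Sum>(U, u, v)\<in>?T. h (u @ c # v))"
    using assms(1) by (simp add: sum.Sigma sum.cartesian_product)
  also have "\<dots> = (\<Sum>\<pi>\<in>permutations_of_set S. h \<pi>)"
  proof (rule sum.reindex_bij_witness[where i = "\<lambda>\<pi>. (set (?pre \<pi>), ?pre \<pi>, ?post \<pi>)"
        and j = "\<lambda>(U, u, v). u @ c # v"])
    fix q assume "q \<in> ?T"
    then obtain U u v where "q = (U, u, v)" "U \<subseteq> S - {c}" "set u = U" "distinct u"
      "set v = S - {c} - U" "distinct v"
      by (auto simp: permutations_of_set_def)
    with assms(2) split_eq[of u v] show "(set (?pre ((\<lambda>(U, u, v). u @ c # v) q)),
        ?pre ((\<lambda>(U, u, v). u @ c # v) q), ?post ((\<lambda>(U, u, v). u @ c # v) q)) = q"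
      "(\<lambda>(U, u, v). u @ c # v) q \<in> permutations_of_set S"
      by (auto simp: permutations_of_set_def)
  next
    fix \<pi> assume \<pi>: "\<pi> \<in> permutations_of_set S"
    with assms(2) have "c \<in> set \<pi>"
      by (simp add: permutations_of_set_def)
    then obtain u v where uv: "\<pi> = u @ c # v" "c \<notin> set u"
      by (metis split_list_first)
    with \<pi> split_eq[of u v] show "(\<lambda>(U, u, v). u @ c # v) (set (?pre \<pi>), ?pre \<pi>, ?post \<pi>) = \<pi>"
      "(set (?pre \<pi>), ?pre \<pi>, ?post \<pi>) \<in> ?T"
      by (auto simp: permutations_of_set_def)
  qed (auto simp: case_prod_beta)
  finally show ?thesis
    by simp
qed

lemma sum_permutations_of_set_split_mult:
  fixes h f g :: "'a list \<Rightarrow> 'b::comm_semiring_0"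
  assumes "finite S" "c \<in> S"
    and "\<And>u v. distinct u \<Longrightarrow> distinct v \<Longrightarrow> set u \<inter> set v = {} \<Longrightarrow> set u \<union> set v = S - {c} \<Longrightarrow>
           h (u @ c # v) = k (set u) (set v) * f u * g v"
  shows "(\<Sum>\<pi>\<in>permutations_of_set S. h \<pi>) = (\<Sum>U\<in>Pow (S - {c}). k U (S - {c} - U) *
           (\<Sum>u\<in>permutations_of_set U. f u) * (\<Sum>v\<in>permutations_of_set (S - {c} - U). g v))"
proof -
  have "(\<Sum>\<pi>\<in>permutations_of_set S. h \<pi>) = (\<Sum>U\<in>Pow (S - {c}). \<Sum>u\<in>permutations_of_set U.
      \<Sum>v\<in>permutations_of_set (S - {c} - U). k U (S - {c} - U) * (f u * g v))"
    unfolding sum_permutations_of_set_split[OF assms(1,2)]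
  proof (intro sum.cong refl)
    fix U u v
    assume "U \<in> Pow (S - {c})" "u \<in> permutations_of_set U" "v \<in> permutations_of_set (S - {c} - U)"
    then show "h (u @ c # v) = k U (S - {c} - U) * (f u * g v)"
      by (subst assms(3)) (auto simp: permutations_of_set_def mult.assoc)
  qed
  moreover have "a * sum f A * sum g B = (\<Sum>u\<in>A. \<Sum>v\<in>B. a * (f u * g v))" for a A B
    unfolding mult.assoc sum_product by (simp add: sum_distrib_left)
  ultimately show ?thesis
    by simp
qed

definition occurs_before :: "'a \<Rightarrow> 'a \<Rightarrow> 'a list \<Rightarrow> bool" where
  "occurs_before a b \<pi> \<longleftrightarrow> b \<in> set (dropWhile (\<lambda>y. y \<noteq> a) \<pi>)"

lemma occurs_before_append_Cons:
  "a \<notin> set u \<Longrightarrow> occurs_before a b (u @ a # v) \<longleftrightarrow> b = a \<or> b \<in> set v"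
  by (induction u) (auto simp: occurs_before_def)

lemma not_occurs_before_iff:
  assumes "distinct \<pi>" "a \<in> set \<pi>" "b \<in> set \<pi>" "a \<noteq> b"
  shows "\<not> occurs_before a b \<pi> \<longleftrightarrow> occurs_before b a \<pi>"
proof -
  obtain u v where \<pi>: "\<pi> = u @ a # v" "a \<notin> set u"
    using assms(2) by (metis split_list_first)
  show ?thesis
  proof (cases "b \<in> set v")
    case True
    then obtain v1 v2 where "v = v1 @ b # v2"
      by (metis split_list)
    with assms(1) \<pi> show ?thesis
      using occurs_before_append_Cons[of a u b v] occurs_before_append_Cons[of b "u @ a # v1" a v2]
      by auto
  next
    case False
    with assms(3,4) \<pi> obtain u1 u2 where "u = u1 @ b # u2"
      by (metis Un_iff empty_iff list.set(2) insert_iff set_append split_list)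
    with assms(1) \<pi> False show ?thesis
      using occurs_before_append_Cons[of a u b v] occurs_before_append_Cons[of b u1 a "u2 @ a # v"]
      by auto
  qed
qed

lemma sum_permutations_of_set_occurs_before:
  fixes h f g :: "'a list \<Rightarrow> 'b::comm_semiring_0"
  assumes "finite S" "a \<in> S" "b \<in> S" "a \<noteq> b"
    and "\<And>u v. distinct u \<Longrightarrow> distinct v \<Longrightarrow> set u \<inter> set v = {} \<Longrightarrow> set u \<union> set v = S - {a} \<Longrightarrow>
           b \<in> set v \<Longrightarrow> h (u @ a # v) = k * f u * g v"
  shows "(\<Sum>\<pi>\<in>permutations_of_set S. if occurs_before a b \<pi> then h \<pi> else 0) = (\<Sum>U\<in>Pow (S - {a} - {b}).
           k * (\<Sum>u\<in>permutations_of_set U. f u) * (\<Sum>v\<in>permutations_of_set (S - {a} - U). g v))"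
proof -
  have "(\<Sum>\<pi>\<in>permutations_of_set S. if occurs_before a b \<pi> then h \<pi> else 0) =
      (\<Sum>U\<in>Pow (S - {a}). (if b \<in> S - {a} - U then k else 0) *
        (\<Sum>u\<in>permutations_of_set U. f u) * (\<Sum>v\<in>permutations_of_set (S - {a} - U). g v))"
  proof (rule sum_permutations_of_set_split_mult[OF assms(1,2)])
    fix u v
    assume uv: "distinct u" "distinct v" "set u \<inter> set v = {}" "set u \<union> set v = S - {a}"
    then have "occurs_before a b (u @ a # v) \<longleftrightarrow> b \<in> set v"
      using assms(4) by (subst occurs_before_append_Cons) auto
    with uv assms(5) show "(if occurs_before a b (u @ a # v) then h (u @ a # v) else 0) =
        (if b \<in> set v then k else 0) * f u * g v"
      by auto
  qed
  also have "\<dots> = (\<Sum>U\<in>Pow (S - {a}). if b \<notin> U then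
      k * (\<Sum>u\<in>permutations_of_set U. f u) * (\<Sum>v\<in>permutations_of_set (S - {a} - U). g v) else 0)"
    using assms(3,4) by (intro sum.cong refl) auto
  also have "\<dots> = (\<Sum>U\<in>Pow (S - {a} - {b}).
      k * (\<Sum>u\<in>permutations_of_set U. f u) * (\<Sum>v\<in>permutations_of_set (S - {a} - U). g v))"
    using assms(1) by (intro sum_Pow_if_notin) simp
  finally show ?thesis .
qed

section \<open>The type A gamma-expansion\<close>

definition des_sum :: "real \<Rightarrow> 'a::linorder set \<Rightarrow> real" where
  "des_sum x S = (\<Sum>\<pi>\<in>permutations_of_set S. x ^ des \<pi>)"

definition andre_sum :: "real \<Rightarrow> 'a::linorder set \<Rightarrow> real" where
  "andre_sum x S = (\<Sum>\<pi>\<in>permutations_of_set S. andre_weight x \<pi>)"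

lemma des_sum_empty [simp]: "des_sum x {} = 1"
  by (simp add: des_sum_def)

lemma andre_sum_empty [simp]: "andre_sum x {} = 1"
  by (simp add: andre_sum_def)

lemma des_sum_split_Min:
  assumes "finite S" "m \<in> S" "\<forall>y\<in>S - {m}. m < y"
  shows "des_sum x S =
           (\<Sum>U\<in>Pow (S - {m}). (if U = {} then 1 else x) * des_sum x U * des_sum x (S - {m} - U))"
  unfolding des_sum_def
proof (rule sum_permutations_of_set_split_mult[OF assms(1,2)])
  fix u v :: "'a list"
  assume "set u \<union> set v = S - {m}"
  with assms(3) have "des (u @ m # v) = des u + des v + (if u = [] then 0 else 1)"
    by (intro des_append_Cons_min) auto
  then show "x ^ des (u @ m # v) = (if set u = {} then 1 else x) * x ^ des u * x ^ des v"
    by (simp add: power_add)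
qed

lemma des_sum_split_Max:
  assumes "finite S" "M \<in> S" "\<forall>y\<in>S - {M}. y < M"
  shows "des_sum x S =
           (\<Sum>U\<in>Pow (S - {M}).
              (if S - {M} - U = {} then 1 else x) * des_sum x U * des_sum x (S - {M} - U))"
  unfolding des_sum_def
proof (rule sum_permutations_of_set_split_mult[OF assms(1,2)])
  fix u v :: "'a list"
  assume "set u \<union> set v = S - {M}"
  with assms(3) have "des (u @ M # v) = des u + des v + (if v = [] then 0 else 1)"
    by (intro des_append_Cons_max) auto
  then show "x ^ des (u @ M # v) = (if set v = {} then 1 else x) * x ^ des u * x ^ des v"
    by (simp add: power_add)
qed

lemma andre_sum_split_Min:
  assumes "finite S" "m \<in> S" "\<forall>y\<in>S - {m}. m < y"
  shows "andre_sum x S =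
           (\<Sum>U\<in>Pow (S - {m}).
              andre_coeff x U (S - {m} - U) * andre_sum x U * andre_sum x (S - {m} - U))"
  unfolding andre_sum_def
proof (rule sum_permutations_of_set_split_mult[OF assms(1,2)])
  fix u v :: "'a list"
  assume "distinct u" "distinct v" "set u \<union> set v = S - {m}"
  with assms(3) show "andre_weight x (u @ m # v) =
      andre_coeff x (set u) (set v) * andre_weight x u * andre_weight x v"
    by (intro andre_weight_append_Cons_min) auto
qed

theorem des_sum_eq_andre_sum:
  fixes S :: "'a::linorder set"
  assumes "finite S"
  shows "des_sum x S = andre_sum x S"
  using assms
proof (induction "card S" arbitrary: S rule: less_induct)
  case less
  show ?case
  proof (cases "S = {}")
    case False
    define T where "T = S - {Min S}"
    have m: "Min S \<in> S" "\<forall>y\<in>S - {Min S}. Min S < y"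
      using less.prems False by (auto simp: order.strict_iff_order)
    have IH: "des_sum x U = andre_sum x U" if "U \<subseteq> T" for U
    proof -
      have "card U < card S"
        using that m less.prems by (intro psubset_card_mono) (auto simp: T_def)
      with that less.prems show ?thesis
        by (intro less.hyps) (auto simp: T_def intro: finite_subset)
    qed
    have "des_sum x S = (\<Sum>U\<in>Pow T. (if U = {} then 1 else x) * des_sum x U * des_sum x (T - U))"
      unfolding T_def by (rule des_sum_split_Min[OF less.prems m])
    also have "\<dots> = (\<Sum>U\<in>Pow T. andre_coeff x U (T - U) * des_sum x U * des_sum x (T - U))"
    proof (rule sum_Pow_complement_coeffs)
      show "finite T"
        using less.prems by (simp add: T_def)
      fix U assume "U \<subseteq> T"
      with \<open>finite T\<close> show "(if U = {} then 1 else x) + (if T - U = {} then 1 else x) =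
          andre_coeff x U (T - U) + andre_coeff x (T - U) (T - (T - U))"
        by (simp add: andre_coeff_swap double_diff finite_subset)
    qed
    also have "\<dots> = (\<Sum>U\<in>Pow T. andre_coeff x U (T - U) * andre_sum x U * andre_sum x (T - U))"
      using IH by (intro sum.cong refl) auto
    also have "\<dots> = andre_sum x S"
      unfolding T_def by (rule andre_sum_split_Min[OF less.prems m, symmetric])
    finally show ?thesis .
  qed simp
qed

lemma des_sum_uminus:
  fixes S :: "'a::linordered_ab_group_add set"
  shows "des_sum x (uminus ` S) = des_sum x S"
  unfolding des_sum_def
  by (rule sum.reindex_bij_witness[where i = "\<lambda>\<pi>. rev (map uminus \<pi>)"
        and j = "\<lambda>\<pi>. rev (map uminus \<pi>)"])
    (auto simp: permutations_of_set_def rev_map distinct_map inj_on_def image_image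
      des_rev_map_uminus[of "rev _", simplified rev_map, simplified])

lemma des_sum_insert_Max_eq_insert_Min:
  assumes "finite W" "\<forall>y\<in>W. y < M" "\<forall>y\<in>W. m < y"
  shows "des_sum x (insert M W) = des_sum x (insert m W)"
proof -
  have W: "insert M W - {M} = W" "insert m W - {m} = W"
    using assms(2,3) by auto
  have "des_sum x (insert M W) =
      (\<Sum>U\<in>Pow W. (if W - U = {} then 1 else x) * des_sum x U * des_sum x (W - U))"
    using des_sum_split_Max[of "insert M W" M x] assms(1,2) unfolding W by simp
  also have "\<dots> = (\<Sum>U\<in>Pow W. (if U = {} then 1 else x) * des_sum x U * des_sum x (W - U))"
    by (rule sum_Pow_complement_coeffs) (auto simp: assms(1) double_diff)
  also have "\<dots> = des_sum x (insert m W)"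
    using des_sum_split_Min[of "insert m W" m x] assms(1,3) unfolding W by simp
  finally show ?thesis .
qed

lemma des_sum_diff_Max_eq_diff_Min:
  fixes X :: "'a::linorder set"
  assumes "finite X" "X \<noteq> {}" "Min X \<noteq> Max X" "U \<subseteq> X - {Min X} - {Max X}"
  shows "des_sum x (X - {Max X} - U) = des_sum x (X - {Min X} - U)"
proof -
  let ?W = "X - {Min X} - {Max X} - U"
  have "Min X \<in> X" "Max X \<in> X"
    using assms(1,2) by simp_all
  with assms(3,4) have "X - {Max X} - U = insert (Min X) ?W" "X - {Min X} - U = insert (Max X) ?W"
    by auto
  moreover have "\<forall>y\<in>?W. y < Max X" "\<forall>y\<in>?W. Min X < y"
    using assms(1) by (auto simp: order.strict_iff_order)
  ultimately show ?thesis
    using des_sum_insert_Max_eq_insert_Min[of ?W "Max X" "Min X" x] assms(1) by simp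
qed

section \<open>The type B recursion\<close>

definition des_sumB :: "real \<Rightarrow> 'a::linordered_ab_group_add set \<Rightarrow> real" where
  "des_sumB x X = (\<Sum>\<pi>\<in>permutations_of_set X. x ^ des (0 # \<pi>))"

definition andre_sumB :: "real \<Rightarrow> 'a::linordered_ab_group_add set \<Rightarrow> real" where
  "andre_sumB x X = (\<Sum>\<pi>\<in>permutations_of_set X. andre_weight x (0 # \<pi>))"

lemma des_sumB_positive:
  assumes "\<forall>y\<in>X. 0 < y"
  shows "des_sumB x X = des_sum x X"
  unfolding des_sumB_def des_sum_def
proof (intro sum.cong refl)
  fix \<pi> assume "\<pi> \<in> permutations_of_set X"
  with assms have "\<pi> \<noteq> [] \<Longrightarrow> 0 < hd \<pi>"
    by (auto simp: permutations_of_set_def)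
  then show "x ^ des (0 # \<pi>) = x ^ des \<pi>"
    by (auto simp: des_Cons dest: less_asym)
qed

lemma des_sumB_negative:
  assumes "X \<noteq> {}" "\<forall>y\<in>X. y < 0"
  shows "des_sumB x X = x * des_sum x X"
  unfolding des_sumB_def des_sum_def sum_distrib_left
proof (intro sum.cong refl)
  fix \<pi> assume "\<pi> \<in> permutations_of_set X"
  with assms have "\<pi> \<noteq> []" "\<forall>y\<in>set \<pi>. y < 0"
    by (auto simp: permutations_of_set_def)
  then show "x ^ des (0 # \<pi>) = x * x ^ des \<pi>"
    by (simp add: des_Cons)
qed

lemma andre_sumB_positive:
  assumes "X \<noteq> {}" "\<forall>y\<in>X. 0 < y"
  shows "andre_sumB x X = (1 + x) * andre_sum x X"
  unfolding andre_sumB_def andre_sum_def sum_distrib_left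
proof (intro sum.cong refl)
  fix \<pi> assume "\<pi> \<in> permutations_of_set X"
  with assms have "\<pi> \<noteq> []" "\<forall>y\<in>set \<pi>. 0 < y" "distinct \<pi>"
    by (auto simp: permutations_of_set_def)
  then show "andre_weight x (0 # \<pi>) = (1 + x) * andre_weight x \<pi>"
    using andre_weight_append_Cons_min[of "[]" 0 \<pi> x] by (simp add: andre_coeff_def)
qed

lemma andre_sumB_negative:
  assumes "X \<noteq> {}" "\<forall>y\<in>X. y < 0"
  shows "andre_sumB x X = 0"
  unfolding andre_sumB_def
proof (intro sum.neutral ballI)
  fix \<pi> assume "\<pi> \<in> permutations_of_set X"
  with assms have \<pi>: "\<pi> \<noteq> []" "distinct \<pi>" "\<forall>y\<in>set \<pi>. y < 0"
    by (auto simp: permutations_of_set_def)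
  obtain u m v where "\<pi> = u @ m # v" "\<forall>y\<in>set u. m < y" "\<forall>y\<in>set v. m < y"
    using split_at_Min[OF \<pi>(2,1)] .
  with \<pi> have "andre_weight x ((0 # u) @ m # v) = andre_coeff x (insert 0 (set u)) (set v) *
      andre_weight x (0 # u) * andre_weight x v"
    using andre_weight_append_Cons_min[of "0 # u" m v x] by auto
  moreover have "andre_coeff x (insert 0 (set u)) (set v) = 0"
  proof (cases "v = []")
    case False
    with \<pi> \<open>\<pi> = u @ m # v\<close> have "Max (set v) < 0"
      by simp
    moreover have "0 \<le> Max (insert 0 (set u))"
      by simp
    ultimately have "\<not> Max (insert 0 (set u)) < Max (set v)"
      by (metis leD less_trans)
    then show ?thesis
      unfolding andre_coeff_def by (simp; blast)
  qed (simp add: andre_coeff_def)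
  ultimately show "andre_weight x (0 # \<pi>) = 0"
    using \<open>\<pi> = u @ m # v\<close> by simp
qed

lemma sym_des_sumB_eq_sym_andre_sumB_positive:
  assumes "finite X" "X \<noteq> {}" "\<forall>y\<in>X. 0 < y"
  shows "des_sumB x X + des_sumB x (uminus ` X) = andre_sumB x X + andre_sumB x (uminus ` X)"
proof -
  have neg: "uminus ` X \<noteq> {}" "\<forall>y\<in>uminus ` X. y < 0"
    using assms by auto
  have "des_sumB x X + des_sumB x (uminus ` X) = (1 + x) * des_sum x X"
    using des_sumB_positive[OF assms(3)] des_sumB_negative[OF neg] des_sum_uminus[of x X]
    by (simp add: algebra_simps)
  also have "\<dots> = andre_sumB x X + andre_sumB x (uminus ` X)"
    using andre_sumB_positive[OF assms(2,3)] andre_sumB_negative[OF neg]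
      des_sum_eq_andre_sum[OF assms(1)]
    by simp
  finally show ?thesis .
qed

lemma des_sumB_split_Min_Max:
  fixes X :: "'a::linordered_ab_group_add set"
  assumes "finite X" "X \<noteq> {}" "Min X < 0" "0 < Max X"
  shows "des_sumB x X =
           2 * x * (\<Sum>U\<in>Pow (X - {Min X} - {Max X}). des_sumB x U * des_sum x (X - {Min X} - U))"
proof -
  let ?m = "Min X" and ?M = "Max X" and ?t = "\<lambda>\<pi>. x ^ des (0 # \<pi>)"
  have mM: "?m \<in> X" "?M \<in> X" "?m \<noteq> ?M"
    using assms by auto
  have below: "\<forall>y\<in>X - {?m}. ?m < y" and above: "\<forall>y\<in>X - {?M}. y < ?M"
    using assms(1) by (auto simp: order.strict_iff_order)
  have "des_sumB x X = (\<Sum>\<pi>\<in>permutations_of_set X. if occurs_before ?m ?M \<pi> then ?t \<pi> else 0)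
      + (\<Sum>\<pi>\<in>permutations_of_set X. if occurs_before ?M ?m \<pi> then ?t \<pi> else 0)"
    unfolding des_sumB_def sum.distrib[symmetric]
    using not_occurs_before_iff[of _ ?m ?M] mM
    by (intro sum.cong refl) (auto simp: permutations_of_set_def)
  also have "(\<Sum>\<pi>\<in>permutations_of_set X. if occurs_before ?m ?M \<pi> then ?t \<pi> else 0) =
      (\<Sum>U\<in>Pow (X - {?m} - {?M}). x * des_sumB x U * des_sum x (X - {?m} - U))"
    unfolding des_sumB_def des_sum_def
  proof (rule sum_permutations_of_set_occurs_before[OF assms(1) mM])
    fix u v assume "set u \<union> set v = X - {?m}"
    with below assms(3) have "des ((0 # u) @ ?m # v) = des (0 # u) + des v + 1"
      by (subst des_append_Cons_min) auto
    then show "?t (u @ ?m # v) = x * ?t u * x ^ des v"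
      by (simp add: power_add)
  qed
  also have "(\<Sum>\<pi>\<in>permutations_of_set X. if occurs_before ?M ?m \<pi> then ?t \<pi> else 0) =
      (\<Sum>U\<in>Pow (X - {?M} - {?m}). x * des_sumB x U * des_sum x (X - {?M} - U))"
    unfolding des_sumB_def des_sum_def
  proof (rule sum_permutations_of_set_occurs_before[OF assms(1) mM(2,1) mM(3)[symmetric]])
    fix u v assume "set u \<union> set v = X - {?M}" "?m \<in> set v"
    with above assms(4) have "des ((0 # u) @ ?M # v) = des (0 # u) + des v + 1"
      by (subst des_append_Cons_max) auto
    then show "?t (u @ ?M # v) = x * ?t u * x ^ des v"
      by (simp add: power_add)
  qed
  also have "\<dots> = (\<Sum>U\<in>Pow (X - {?m} - {?M}). x * des_sumB x U * des_sum x (X - {?m} - U))"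
    using des_sum_diff_Max_eq_diff_Min[OF assms(1,2) mM(3)]
    by (simp add: Diff_insert2[symmetric] insert_commute)
  finally have "des_sumB x X =
      2 * (\<Sum>U\<in>Pow (X - {?m} - {?M}). x * des_sumB x U * des_sum x (X - {?m} - U))"
    by simp
  then show ?thesis
    by (simp add: sum_distrib_left mult.assoc)
qed

lemma andre_coeff_insert_0_Max:
  fixes X :: "'a::linordered_ab_group_add set"
  assumes "finite X" "0 < Max X" "Max X \<in> X" "U \<subseteq> X - {m}" "m \<noteq> Max X"
  shows "andre_coeff x (insert 0 U) (X - {m} - U) = (if Max X \<notin> U then 2 * x else 0)"
proof (cases "Max X \<in> U")
  case True
  have "finite U"
    using assms(1,4) finite_subset by auto
  with True have "Max X \<le> Max (insert 0 U)"
    by simp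
  moreover have "Max (X - {m} - U) \<le> Max X" if "X - {m} - U \<noteq> {}"
    using that assms(1) by simp
  ultimately have "\<not> (X - {m} - U \<noteq> {} \<and> Max (insert 0 U) < Max (X - {m} - U))"
    by (meson leD order.trans)
  with True show ?thesis
    unfolding andre_coeff_def by (simp; blast)
next
  case False
  then have "Max (X - {m} - U) = Max X"
    using assms by (intro Max_eqI) auto
  moreover have "finite U" "\<forall>a\<in>U. a < Max X"
    using assms(1,4) False finite_subset[of U X] by (auto simp: order.strict_iff_order)
  then have "Max (insert 0 U) < Max X"
    using assms(2) by simp
  ultimately show ?thesis
    using False assms(3,5) by (auto simp: andre_coeff_def)
qed

lemma andre_sumB_split_Min_Max:
  fixes X :: "'a::linordered_ab_group_add set"
  assumes "finite X" "X \<noteq> {}" "Min X < 0" "0 < Max X" "0 \<notin> X"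
  shows "andre_sumB x X =
           2 * x * (\<Sum>U\<in>Pow (X - {Min X} - {Max X}). andre_sumB x U * andre_sum x (X - {Min X} - U))"
proof -
  let ?m = "Min X" and ?M = "Max X"
  have mM: "?m \<in> X" "?M \<in> X" "?m \<noteq> ?M"
    using assms by auto
  have below: "\<forall>y\<in>X - {?m}. ?m < y"
    using assms(1) by (auto simp: order.strict_iff_order)
  have "andre_sumB x X = (\<Sum>U\<in>Pow (X - {?m}).
      andre_coeff x (insert 0 U) (X - {?m} - U) * andre_sumB x U * andre_sum x (X - {?m} - U))"
    unfolding andre_sumB_def andre_sum_def
  proof (rule sum_permutations_of_set_split_mult[OF assms(1) mM(1)])
    fix u v assume uv: "distinct u" "distinct v" "set u \<union> set v = X - {?m}"
    moreover have "0 \<notin> set u"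
      using uv(3) assms(5) by auto
    ultimately show "andre_weight x (0 # u @ ?m # v) =
        andre_coeff x (insert 0 (set u)) (set v) * andre_weight x (0 # u) * andre_weight x v"
      using below assms(3) andre_weight_append_Cons_min[of "0 # u" ?m v x] by auto
  qed
  also have "\<dots> = (\<Sum>U\<in>Pow (X - {?m}).
      if ?M \<notin> U then 2 * x * andre_sumB x U * andre_sum x (X - {?m} - U) else 0)"
    using andre_coeff_insert_0_Max[OF assms(1,4) mM(2) _ mM(3)] by (intro sum.cong refl) auto
  also have "\<dots> = (\<Sum>U\<in>Pow (X - {?m} - {?M}). 2 * x * andre_sumB x U * andre_sum x (X - {?m} - U))"
    using assms(1) by (intro sum_Pow_if_notin) simp
  finally show ?thesis
    by (simp add: sum_distrib_left mult.assoc)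
qed

lemma sym_split_Min_Max:
  fixes h :: "'a::linordered_ab_group_add set \<Rightarrow> real"
  assumes rec: "\<And>Z. finite Z \<Longrightarrow> Z \<noteq> {} \<Longrightarrow> 0 \<notin> Z \<Longrightarrow> Min Z < 0 \<Longrightarrow> 0 < Max Z \<Longrightarrow>
      h Z = 2 * x * (\<Sum>U\<in>Pow (Z - {Min Z} - {Max Z}). h U * des_sum x (Z - {Min Z} - U))"
    and X: "finite X" "X \<noteq> {}" "0 \<notin> X" "Min X < 0" "0 < Max X"
  shows "h X + h (uminus ` X) = 2 * x *
           (\<Sum>U\<in>Pow (X - {Min X} - {Max X}). (h U + h (uminus ` U)) * des_sum x (X - {Min X} - U))"
proof -
  let ?m = "Min X" and ?M = "Max X"
  have minus_Min: "Min (uminus ` X) = - ?M" and minus_Max: "Max (uminus ` X) = - ?m"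
    using X(1,2) by simp_all
  have "?m \<noteq> ?M"
    using X by simp
  have "finite (uminus ` X)" "uminus ` X \<noteq> {}" "0 \<notin> uminus ` X"
    "Min (uminus ` X) < 0" "0 < Max (uminus ` X)"
    using X unfolding minus_Min minus_Max by (auto simp del: minus_Max_eq_Min minus_Min_eq_Max)
  moreover have "uminus ` X - {- ?M} - {- ?m} = uminus ` (X - {?m} - {?M})"
    by auto
  moreover have "uminus ` X - {- ?M} - uminus ` U = uminus ` (X - {?M} - U)" for U
    by auto
  ultimately have "h (uminus ` X) = 2 * x *
      (\<Sum>U\<in>Pow (X - {?m} - {?M}). h (uminus ` U) * des_sum x (X - {?M} - U))"
    using rec[of "uminus ` X"] unfolding minus_Min minus_Max
    by (simp add: sum_Pow_image_uminus des_sum_uminus del: minus_Max_eq_Min minus_Min_eq_Max)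
  also have "\<dots> = 2 * x * (\<Sum>U\<in>Pow (X - {?m} - {?M}). h (uminus ` U) * des_sum x (X - {?m} - U))"
    using des_sum_diff_Max_eq_diff_Min[OF X(1,2) \<open>?m \<noteq> ?M\<close>] by simp
  finally show ?thesis
    using rec[OF X] by (simp add: sum.distrib algebra_simps)
qed

lemma sign_cases:
  fixes X :: "'a::linordered_ab_group_add set"
  assumes "finite X" "0 \<notin> X"
  obtains "X = {}" | "X \<noteq> {}" "\<forall>y\<in>X. 0 < y" | "X \<noteq> {}" "\<forall>y\<in>X. y < 0"
    | "X \<noteq> {}" "Min X < 0" "0 < Max X"
proof -
  have "Min X < 0" if "y \<in> X" "y < 0" for y
    using assms(1) that by (meson Min_le le_less_trans)
  moreover have "0 < Max X" if "y \<in> X" "0 < y" for y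
    using assms(1) that by (meson Max_ge less_le_trans)
  ultimately show thesis
    using that assms(2) by (metis neqE)
qed

theorem sym_des_sumB_eq_sym_andre_sumB:
  fixes X :: "'a::linordered_ab_group_add set"
  assumes "finite X" "0 \<notin> X"
  shows "des_sumB x X + des_sumB x (uminus ` X) = andre_sumB x X + andre_sumB x (uminus ` X)"
  using assms
proof (induction "card X" arbitrary: X rule: less_induct)
  case less
  from less.prems consider "X = {}" | "X \<noteq> {}" "\<forall>y\<in>X. 0 < y" | "X \<noteq> {}" "\<forall>y\<in>X. y < 0"
    | "X \<noteq> {}" "Min X < 0" "0 < Max X"
    by (rule sign_cases)
  then show ?case
  proof cases
    case 1
    then show ?thesis
      by (simp add: des_sumB_def andre_sumB_def des_Cons)
  next
    case 2
    then show ?thesis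
      using sym_des_sumB_eq_sym_andre_sumB_positive[OF less.prems(1)] by blast
  next
    case 3
    then have "\<forall>y\<in>uminus ` X. 0 < y" "uminus ` X \<noteq> {}"
      by auto
    then show ?thesis
      using sym_des_sumB_eq_sym_andre_sumB_positive[of "uminus ` X" x] less.prems(1)
      by (simp add: image_image add.commute)
  next
    case 4
    let ?Y = "X - {Min X} - {Max X}"
    have IH: "des_sumB x U + des_sumB x (uminus ` U) = andre_sumB x U + andre_sumB x (uminus ` U)"
      if "U \<in> Pow ?Y" for U
    proof (rule less.hyps)
      have "Min X \<in> X"
        using 4 less.prems(1) by simp
      with that less.prems(1) show "card U < card X"
        by (intro psubset_card_mono) auto
      show "finite U" "0 \<notin> U"
        using that less.prems by (auto intro: finite_subset)
    qed
    have "des_sumB x X + des_sumB x (uminus ` X) =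
        2 * x * (\<Sum>U\<in>Pow ?Y. (des_sumB x U + des_sumB x (uminus ` U)) * des_sum x (X - {Min X} - U))"
      by (rule sym_split_Min_Max[where h = "des_sumB x"])
        (use des_sumB_split_Min_Max less.prems 4 in auto)
    also have "\<dots> =
        2 * x * (\<Sum>U\<in>Pow ?Y. (andre_sumB x U + andre_sumB x (uminus ` U)) * des_sum x (X - {Min X} - U))"
      using IH by simp
    also have "\<dots> = andre_sumB x X + andre_sumB x (uminus ` X)"
      by (rule sym_split_Min_Max[where h = "andre_sumB x", symmetric])
        (use less.prems 4 in \<open>auto simp: andre_sumB_split_Min_Max des_sum_eq_andre_sum\<close>)
    finally show ?thesis .
  qed
qed

section \<open>Signed permutations\<close>

lemma set_takeWhile_conv_nth:
  "set (takeWhile P xs) = {xs ! k | k. k < length xs \<and> (\<forall>p\<le>k. P (xs ! p))}"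
proof -
  have len: "k < length (takeWhile P xs) \<longleftrightarrow> k < length xs \<and> (\<forall>p\<le>k. P (xs ! p))" for k
  proof
    assume k: "k < length (takeWhile P xs)"
    then have "k < length xs"
      using length_takeWhile_le[of P xs] by linarith
    moreover have "P (xs ! p)" if "p \<le> k" for p
    proof -
      have p: "p < length (takeWhile P xs)"
        using k that by linarith
      then have "P (takeWhile P xs ! p)"
        by (blast dest: nth_mem set_takeWhileD)
      with p show ?thesis
        by (simp add: takeWhile_nth)
    qed
    ultimately show "k < length xs \<and> (\<forall>p\<le>k. P (xs ! p))"
      by blast
  next
    assume "k < length xs \<and> (\<forall>p\<le>k. P (xs ! p))"
    then show "k < length (takeWhile P xs)"
      using length_takeWhile_less_P_nth[of "Suc k" P xs] by (auto simp: less_Suc_eq_le)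
  qed
  have "set (takeWhile P xs) = {takeWhile P xs ! k | k. k < length (takeWhile P xs)}"
    by (rule set_conv_nth)
  also have "\<dots> = {xs ! k | k. k < length (takeWhile P xs)}"
    by (intro Collect_cong) (metis takeWhile_nth)
  finally show ?thesis
    unfolding len .
qed

lemma set_left_factor:
  assumes "i < length l"
  shows "set (left_factor l i) = {l ! k | k. k < i \<and> (\<forall>p. k \<le> p \<and> p < i \<longrightarrow> l ! i < l ! p)}"
    (is "_ = ?B")
proof -
  let ?A = "{l ! (i - Suc k) | k. k < i \<and> (\<forall>p\<le>k. l ! i < l ! (i - Suc p))}"
  have len: "length (rev (take i l)) = i"
    using assms by simp
  have "rev (take i l) ! k = l ! (i - Suc k)" if "k < i" for k
    using assms that by (simp add: rev_nth)
  then have "set (left_factor l i) = ?A"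
    unfolding left_factor_def set_takeWhile_conv_nth len by (intro Collect_cong ex_cong1) auto
  also have "?A = ?B"
  proof
    show "?A \<subseteq> ?B"
    proof
      fix y assume "y \<in> ?A"
      then obtain k where k: "y = l ! (i - Suc k)" "k < i" "\<forall>p\<le>k. l ! i < l ! (i - Suc p)"
        by blast
      have "l ! i < l ! q" if "i - Suc k \<le> q" "q < i" for q
        using k(3)[rule_format, of "i - Suc q"] that by (simp add: Suc_diff_Suc)
      with k show "y \<in> ?B"
        by (intro CollectI exI[of _ "i - Suc k"]) auto
    qed
    show "?B \<subseteq> ?A"
    proof
      fix y assume "y \<in> ?B"
      then obtain k where k: "y = l ! k" "k < i" "\<forall>p. k \<le> p \<and> p < i \<longrightarrow> l ! i < l ! p"
        by blast
      have "l ! i < l ! (i - Suc p)" if "p \<le> i - Suc k" for p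
        using k(3)[rule_format, of "i - Suc p"] that k(2) by simp
      with k show "y \<in> ?A"
        by (intro CollectI exI[of _ "i - Suc k"]) (auto simp: Suc_diff_Suc)
    qed
  qed
  finally show ?thesis .
qed

lemma set_right_factor:
  "set (right_factor l i) =
     {l ! k | k. i < k \<and> k < length l \<and> (\<forall>p. i < p \<and> p \<le> k \<longrightarrow> l ! i < l ! p)}"
    (is "_ = ?B")
proof -
  let ?A = "{l ! (Suc i + k) | k. k < length l - Suc i \<and> (\<forall>p\<le>k. l ! i < l ! (Suc i + p))}"
  have "set (right_factor l i) = ?A"
    unfolding right_factor_def set_takeWhile_conv_nth by (intro Collect_cong ex_cong1) auto
  also have "?A = ?B"
  proof
    show "?A \<subseteq> ?B"
    proof
      fix y assume "y \<in> ?A"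
      then obtain k where k: "y = l ! (Suc i + k)" "k < length l - Suc i"
        "\<forall>p\<le>k. l ! i < l ! (Suc i + p)"
        by blast
      have "l ! i < l ! q" if "i < q" "q \<le> Suc i + k" for q
        using k(3)[rule_format, of "q - Suc i"] that by simp
      with k show "y \<in> ?B"
        by (intro CollectI exI[of _ "Suc i + k"]) auto
    qed
    show "?B \<subseteq> ?A"
    proof
      fix y assume "y \<in> ?B"
      then obtain k where k: "y = l ! k" "i < k" "k < length l" "\<forall>p. i < p \<and> p \<le> k \<longrightarrow> l ! i < l ! p"
        by blast
      with k show "y \<in> ?A"
        by (intro CollectI exI[of _ "k - Suc i"]) auto
    qed
  qed
  finally show ?thesis .
qed

lemma desB_eq_des: "desB w = des (0 # w)"
  by (simp add: desB_def des_def zword_def)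

lemma valleys_eq_valley_set: "valleys w = valley_set (0 # w)"
  by (auto simp: valleys_def valley_set_def triple_positions_def zword_def)

lemma andreB_iff_andre:
  assumes "w \<noteq> []"
  shows "andreB w \<longleftrightarrow> andre (0 # w)"
proof -
  have "max_w2 w i = Max (set (left_factor (0 # w) i))" if "i < length w" for i
    using that by (simp add: max_w2_def zword_def set_left_factor)
  moreover have "max_w4 w i = Max (set (right_factor (0 # w) i))" for i
    by (simp add: max_w4_def zword_def set_right_factor less_Suc_eq_le)
  moreover have "i < length w" if "i \<in> valleys w" for i
    using that by (simp add: valleys_def)
  ultimately have "(\<forall>i\<in>valleys w. max_w2 w i < max_w4 w i) \<longleftrightarrow> andre_valley_condition (0 # w)"
    by (simp add: andre_valley_condition_def valleys_eq_valley_set)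
  moreover have "zword w ! (length w - 1) < zword w ! length w \<longleftrightarrow> ends_with_ascent (0 # w)"
    using assms by (cases w) (auto simp: ends_with_ascent_def zword_def)
  moreover have "(\<nexists>i. 1 \<le> i \<and> i < length w \<and>
      zword w ! (i - 1) > zword w ! i \<and> zword w ! i > zword w ! (i + 1))
      \<longleftrightarrow> no_double_descent (0 # w)"
    by (auto simp: no_double_descent_def triple_positions_def zword_def)
  ultimately show ?thesis
    unfolding andreB_def andre_def by blast
qed

definition sign_choices :: "nat \<Rightarrow> int set set" where
  "sign_choices n = {X. inj_on abs X \<and> abs ` X = {1..int n}}"

lemma sign_choices_subset: "X \<in> sign_choices n \<Longrightarrow> X \<subseteq> {- int n..int n}"
  by (force simp: sign_choices_def)

lemma finite_sign_choices: "finite (sign_choices n)"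
  by (rule finite_subset[of _ "Pow {- int n..int n}"]) (auto dest: sign_choices_subset)

lemma sign_choicesD:
  assumes "X \<in> sign_choices n"
  shows "finite X" "0 \<notin> X" "card X = n"
proof -
  show "finite X"
    using sign_choices_subset[OF assms] finite_subset by blast
  show "0 \<notin> X"
    using assms by (force simp: sign_choices_def)
  show "card X = n"
    using assms card_image[of abs X] by (simp add: sign_choices_def)
qed

lemma uminus_sign_choices: "X \<in> sign_choices n \<Longrightarrow> uminus ` X \<in> sign_choices n"
  by (auto simp: sign_choices_def inj_on_def image_image)

lemma signed_perms_eq: "signed_perms n = (\<Union>X\<in>sign_choices n. permutations_of_set X)"
proof -
  have "w \<in> signed_perms n \<longleftrightarrow> distinct w \<and> set w \<in> sign_choices n" for w
  proof
    assume "w \<in> signed_perms n"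
    then show "distinct w \<and> set w \<in> sign_choices n"
      by (simp add: signed_perms_def sign_choices_def distinct_map)
  next
    assume w: "distinct w \<and> set w \<in> sign_choices n"
    then have "length w = n"
      using sign_choicesD(3)[of "set w" n] distinct_card[of w] by simp
    with w show "w \<in> signed_perms n"
      by (simp add: signed_perms_def sign_choices_def distinct_map)
  qed
  then show ?thesis
    by (auto simp: permutations_of_set_def)
qed

lemma sum_signed_perms:
  "(\<Sum>w\<in>signed_perms n. h w) = (\<Sum>X\<in>sign_choices n. \<Sum>w\<in>permutations_of_set X. h w)"
  unfolding signed_perms_eq
  by (rule sum.UNION_disjoint) (auto simp: finite_sign_choices dest: permutations_of_setD)

lemma finite_signed_perms: "finite (signed_perms n)"
  by (simp add: signed_perms_eq finite_sign_choices)

lemma BnPoly_eq_sum_des_sumB: "BnPoly n x = (\<Sum>X\<in>sign_choices n. des_sumB x X)"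
  by (simp add: BnPoly_def sum_signed_perms des_sumB_def desB_eq_des)

lemma sum_des_sumB_eq_sum_andre_sumB:
  "(\<Sum>X\<in>sign_choices n. des_sumB x X) = (\<Sum>X\<in>sign_choices n. andre_sumB x X)"
proof (rule sum_involution_eq[where \<sigma> = "image uminus"])
  fix X assume "X \<in> sign_choices n"
  then show "des_sumB x X + des_sumB x (uminus ` X) = andre_sumB x X + andre_sumB x (uminus ` X)"
    using sign_choicesD by (blast intro: sym_des_sumB_eq_sym_andre_sumB)
qed (auto simp: finite_sign_choices uminus_sign_choices image_image)

lemma sum_andre_sumB_eq_sum_andreB:
  assumes "n \<ge> 1"
  shows "(\<Sum>X\<in>sign_choices n. andre_sumB x X) = (\<Sum>w\<in>signed_perms n.
           if andreB w then (2 * x) ^ card (valleys w) * (1 + x) ^ (n - 2 * card (valleys w)) else 0)"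
  unfolding sum_signed_perms andre_sumB_def
proof (intro sum.cong refl)
  fix X w assume "X \<in> sign_choices n" "w \<in> permutations_of_set X"
  then have "length w = n"
    using sign_choicesD(3) length_finite_permutations_of_set by blast
  moreover from this assms have "w \<noteq> []"
    by auto
  ultimately show "andre_weight x (0 # w) =
      (if andreB w then (2 * x) ^ card (valleys w) * (1 + x) ^ (n - 2 * card (valleys w)) else 0)"
    by (simp add: andre_weight_def gamma_weight_def andreB_iff_andre valleys_eq_valley_set)
qed

lemma andreB_card_valleys_le:
  assumes "w \<in> signed_perms n" "andreB w"
  shows "card (valleys w) \<le> n div 2"
proof (cases "w = []")
  case False
  from assms(1) obtain X where "X \<in> sign_choices n" "w \<in> permutations_of_set X"
    by (auto simp: signed_perms_eq)
  then have "distinct (0 # w)"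
    using sign_choicesD(2) by (auto simp: permutations_of_set_def)
  moreover have "length w = n"
    using assms(1) by (simp add: signed_perms_def)
  ultimately have "2 * card (valleys w) \<le> n"
    using False assms(2) andre_card_valley_set_bound[of "0 # w"]
    by (simp add: andreB_iff_andre valleys_eq_valley_set)
  then show ?thesis
    by presburger
qed (simp add: valleys_def)

theorem mainTheorem15:
  fixes n :: nat and x :: real
  assumes "n \<ge> 1"
  shows "BnPoly n x = (\<Sum>j=0..n div 2. 2 ^ j * real (bhat n j) * x ^ j * (1 + x) ^ (n - 2 * j))"
proof -
  let ?A = "{w \<in> signed_perms n. andreB w}"
  let ?t = "\<lambda>j. (2 * x) ^ j * (1 + x) ^ (n - 2 * j)"
  have "BnPoly n x = (\<Sum>w\<in>signed_perms n. if andreB w then ?t (card (valleys w)) else 0)"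
    using BnPoly_eq_sum_des_sumB sum_des_sumB_eq_sum_andre_sumB sum_andre_sumB_eq_sum_andreB[OF assms]
    by simp
  also have "\<dots> = (\<Sum>w\<in>?A. ?t (card (valleys w)))"
    by (rule sum.inter_filter[symmetric, OF finite_signed_perms])
  also have "\<dots> = (\<Sum>j=0..n div 2. \<Sum>w\<in>{w \<in> ?A. card (valleys w) = j}. ?t (card (valleys w)))"
    using finite_signed_perms andreB_card_valleys_le by (intro sum.group[symmetric]) auto
  also have "\<dots> = (\<Sum>j=0..n div 2. real (bhat n j) * ?t j)"
    by (simp add: bhat_def conj_assoc)
  finally show ?thesis
    by (simp add: power_mult_distrib mult_ac)
qed

end
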